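(* Suppose an SCC $F$ is pure-Nash-implemented by $\mathcal M=\langle M,g\rangle$. Let $(i,\theta)\in\mathcal I\times\Theta$ and $m\in PNE^{(\mathcal M,\theta)}$. If $F(\theta)\subseteq\arg\min_{z\in Z^*}u_i^\theta(z)$, $\Xi_i(\theta)\ne\emptyset$, and $Z^*\cap\mathcal L_i^Z(F(\theta),\theta)$ is an $i$-$Z^*$-max set, then $$\bigcup_{m_i'\in M_i}\mathrm{SUPP}[g(m_i',m_{-i})]\subseteq Z^*\cap\mathcal L_i^Z(F(\theta),\theta)\cap\Big(\bigcup_{K\in\Xi_i(\theta)}\bigcap_{\theta'\in K}F(\theta')\Big).$$
   Context: Standing setup: $\mathcal I=\{1,\dots,I\}$ finite, $I\ge 3$; $\Theta$ finite or countably infinite; $Z$ finite; $Y=\Delta(Z)$; $u_i^\theta:Z\to\mathbb R$, $U_i^\theta(y)=\sum_zy_zu_i^\theta(z)$; $\mathcal L_i^Z(\alpha,\theta)=\{z\in Z:U_i^\theta(\alpha)\ge u_i^\theta(z)\}$ and $\mathcal L_i^Z(E,\theta)=\bigcap_{z\in E}\mathcal L_i^Z(z,\theta)$. A mechanism $\mathcal M=\langle M=\times_iM_i,g:M\to Y\rangle$ has countable $M_i$; $PNE^{(\mathcal M,\theta)}$ is the set of pure Nash equilibria at $\theta$. $F$ is pure-Nash-implemented by $\mathcal M$ if $\bigcup_{m\in PNE^{(\mathcal M,\theta)}}\mathrm{SUPP}(g[m])=F(\theta)$ for all $\theta$. A nonempty $E\subseteq Z$ is an $i$-max set if for some $\theta$,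 $E\subseteq\arg\max_{z\in E}u_i^\theta(z)$ and $E\subseteq\arg\max_{z\in Z}u_j^\theta(z)$ for all $j\ne i$. $Z^*=\bigcup_\theta F(\theta)$ if $Z$ is an $i$-max set for some $i$, else $Z^*=Z$. A nonempty $E\subseteq Z^*$ is an $i$-$Z^*$-$\theta$-max set if $E\subseteq\arg\max_{z\in E}u_i^\theta(z)$ and $E\subseteq\arg\max_{z\in Z^*}u_j^\theta(z)$ for all $j\ne i$; $\Lambda^i(E)=\{\theta:E\text{ is an }i\text{-}Z^*\text{-}\theta\text{-max set}\}$ ($=\emptyset$ for $E=\emptyset$); $E$ is an $i$-$Z^*$-max set if $\Lambda^i(E)\ne\emptyset$. $\Theta_i^\theta=\{\theta':F(\theta)\text{ is an }i\text{-}Z^*\text{-}\theta'\text{-max set and }F(\theta)\subseteq F(\theta')\}$; $\Xi_i(\theta)=\{K\subseteq\Theta_i^\theta,K\ne\emptyset:\Theta_i^\theta\cap\Lambda^i(Z^*\cap\mathcal L_i^Z(F(\theta),\theta)\cap\bigcap_{\theta'\in K}F(\theta'))=K\}$. *)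

theory Defs
  imports "HOL-Probability.Probability_Mass_Function"
begin

text \<open>Agents: type 'i (finite); states: type 'th (countable); outcomes: type 'z (finite).
  Lotteries Y = Delta(Z) are represented by 'z pmf; SUPP = set_pmf.
  Preferences: u :: 'i => 'th => 'z => real.\<close>

definition expU :: "('i \<Rightarrow> 'th \<Rightarrow> 'z::finite \<Rightarrow> real) \<Rightarrow> 'i \<Rightarrow> 'th \<Rightarrow> 'z pmf \<Rightarrow> real" where
  "expU u i th y = (\<Sum>z\<in>UNIV. pmf y z * u i th z)"

definition argmax_on :: "('z \<Rightarrow> real) \<Rightarrow> 'z set \<Rightarrow> 'z set" where
  "argmax_on f S = {z \<in> S. \<forall>z'\<in>S. f z' \<le> f z}"

definition argmin_on :: "('z \<Rightarrow> real) \<Rightarrow> 'z set \<Rightarrow> 'z set" where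
  "argmin_on f S = {z \<in> S. \<forall>z'\<in>S. f z \<le> f z'}"

definition lower_contour :: "('i \<Rightarrow> 'th \<Rightarrow> 'z \<Rightarrow> real) \<Rightarrow> 'i \<Rightarrow> 'z \<Rightarrow> 'th \<Rightarrow> 'z set" where
  "lower_contour u i z th = {z'. u i th z \<ge> u i th z'}"

definition lower_contour_set :: "('i \<Rightarrow> 'th \<Rightarrow> 'z \<Rightarrow> real) \<Rightarrow> 'i \<Rightarrow> 'z set \<Rightarrow> 'th \<Rightarrow> 'z set" where
  "lower_contour_set u i E th = (\<Inter>z\<in>E. lower_contour u i z th)"

definition is_SCC :: "('th \<Rightarrow> 'z set) \<Rightarrow> bool" where
  "is_SCC F \<longleftrightarrow> (\<forall>th. F th \<noteq> {})"

definition profiles :: "('i \<Rightarrow> 'm set) \<Rightarrow> ('i \<Rightarrow> 'm) set" where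
  "profiles Msg = {m. \<forall>i. m i \<in> Msg i}"

definition is_mechanism :: "('i \<Rightarrow> 'm set) \<Rightarrow> (('i \<Rightarrow> 'm) \<Rightarrow> 'z pmf) \<Rightarrow> bool" where
  "is_mechanism Msg g \<longleftrightarrow> (\<forall>i. countable (Msg i))"

definition PNE :: "('i \<Rightarrow> 'th \<Rightarrow> 'z::finite \<Rightarrow> real) \<Rightarrow> ('i \<Rightarrow> 'm set) \<Rightarrow> (('i \<Rightarrow> 'm) \<Rightarrow> 'z pmf)
    \<Rightarrow> 'th \<Rightarrow> ('i \<Rightarrow> 'm) set" where
  "PNE u Msg g th = {m \<in> profiles Msg. \<forall>i. \<forall>mi'\<in>Msg i.
      expU u i th (g (m(i := mi'))) \<le> expU u i th (g m)}"

definition pure_Nash_implements :: "('i \<Rightarrow> 'th \<Rightarrow> 'z::finite \<Rightarrow> real) \<Rightarrow> ('th \<Rightarrow> 'z set)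
    \<Rightarrow> ('i \<Rightarrow> 'm set) \<Rightarrow> (('i \<Rightarrow> 'm) \<Rightarrow> 'z pmf) \<Rightarrow> bool" where
  "pure_Nash_implements u F Msg g \<longleftrightarrow>
     is_mechanism Msg g \<and> (\<forall>th. (\<Union>m\<in>PNE u Msg g th. set_pmf (g m)) = F th)"

definition is_i_max_set :: "('i \<Rightarrow> 'th \<Rightarrow> 'z \<Rightarrow> real) \<Rightarrow> 'i \<Rightarrow> 'z set \<Rightarrow> bool" where
  "is_i_max_set u i E \<longleftrightarrow> E \<noteq> {} \<and> (\<exists>th. E \<subseteq> argmax_on (u i th) E \<and>
      (\<forall>j. j \<noteq> i \<longrightarrow> E \<subseteq> argmax_on (u j th) UNIV))"

definition Zstar :: "('i \<Rightarrow> 'th \<Rightarrow> 'z \<Rightarrow> real) \<Rightarrow> ('th \<Rightarrow> 'z set) \<Rightarrow> 'z set" where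
  "Zstar u F = (if \<exists>i. is_i_max_set u i UNIV then (\<Union>th. F th) else UNIV)"

definition is_i_Zstar_th_max_set :: "('i \<Rightarrow> 'th \<Rightarrow> 'z \<Rightarrow> real) \<Rightarrow> ('th \<Rightarrow> 'z set)
    \<Rightarrow> 'i \<Rightarrow> 'z set \<Rightarrow> 'th \<Rightarrow> bool" where
  "is_i_Zstar_th_max_set u F i E th \<longleftrightarrow> E \<noteq> {} \<and> E \<subseteq> Zstar u F \<and>
      E \<subseteq> argmax_on (u i th) E \<and>
      (\<forall>j. j \<noteq> i \<longrightarrow> E \<subseteq> argmax_on (u j th) (Zstar u F))"

definition Lambda :: "('i \<Rightarrow> 'th \<Rightarrow> 'z \<Rightarrow> real) \<Rightarrow> ('th \<Rightarrow> 'z set) \<Rightarrow> 'i \<Rightarrow> 'z set \<Rightarrow> 'th set" where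
  "Lambda u F i E = {th. is_i_Zstar_th_max_set u F i E th}"

definition is_i_Zstar_max_set :: "('i \<Rightarrow> 'th \<Rightarrow> 'z \<Rightarrow> real) \<Rightarrow> ('th \<Rightarrow> 'z set) \<Rightarrow> 'i \<Rightarrow> 'z set \<Rightarrow> bool" where
  "is_i_Zstar_max_set u F i E \<longleftrightarrow> Lambda u F i E \<noteq> {}"

definition Theta_i :: "('i \<Rightarrow> 'th \<Rightarrow> 'z \<Rightarrow> real) \<Rightarrow> ('th \<Rightarrow> 'z set) \<Rightarrow> 'i \<Rightarrow> 'th \<Rightarrow> 'th set" where
  "Theta_i u F i th = {th'. is_i_Zstar_th_max_set u F i (F th) th' \<and> F th \<subseteq> F th'}"

definition Xi :: "('i \<Rightarrow> 'th \<Rightarrow> 'z \<Rightarrow> real) \<Rightarrow> ('th \<Rightarrow> 'z set) \<Rightarrow> 'i \<Rightarrow> 'th \<Rightarrow> 'th set set" where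
  "Xi u F i th = {K. K \<subseteq> Theta_i u F i th \<and> K \<noteq> {} \<and>
      Theta_i u F i th \<inter> Lambda u F i (Zstar u F \<inter> lower_contour_set u i (F th) th \<inter> (\<Inter>th'\<in>K. F th')) = K}"

end

theory Submission
  imports Defs
begin

text \<open>At an equilibrium m of th agent i already receives the minimum of u_i over Z*, and every
  outcome of a unilateral deviation of i lies in Z*; since no deviation is profitable, all these
  outcomes are minima too, i.e. lie in E = Z* \<inter> L_i(F th, th). If th' \<in> Lambda^i(X) and all
  deviations of i land in X, then i is indifferent over X and every other agent already gets a
  maximum of Z*, so every deviation profile is an equilibrium at th' and its outcomes lie in F th'.
  The required K \<in> Xi_i(th) is the greatest fixed point of T \<mapsto> Theta_i^th \<inter> Lambda^i(E \<inter> \<Inter>{F t | t \<in> T}),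
  restricted to the states t whose F t contains all deviation outcomes: there the intersection
  contains these outcomes, so it stays nonempty and the map is monotone; and Lambda^i(E), nonempty
  by hypothesis, is a post-fixed point.\<close>

lemma expU_minus_const:
  fixes u :: "'i \<Rightarrow> 'th \<Rightarrow> 'z::finite \<Rightarrow> real"
  shows "expU u i th y - c = (\<Sum>z\<in>UNIV. pmf y z * (u i th z - c))"
proof -
  have "(\<Sum>z\<in>UNIV. pmf y z * (u i th z - c)) = expU u i th y - c * (\<Sum>z\<in>UNIV. pmf y z)"
    unfolding expU_def by (simp add: algebra_simps sum_subtractf sum_distrib_left)
  then show ?thesis
    using sum_pmf_eq_1[of UNIV y] by simp
qed

lemma expU_le_of_support:
  fixes u :: "'i \<Rightarrow> 'th \<Rightarrow> 'z::finite \<Rightarrow> real"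
  assumes "set_pmf y \<subseteq> S" "\<And>z. z \<in> S \<Longrightarrow> u i th z \<le> c"
  shows "expU u i th y \<le> c"
proof -
  have "pmf y z * (u i th z - c) \<le> 0" for z
    using assms by (cases "z \<in> set_pmf y") (auto simp: set_pmf_iff mult_nonneg_nonpos)
  then have "(\<Sum>z\<in>UNIV. pmf y z * (u i th z - c)) \<le> 0"
    by (simp add: sum_nonpos)
  then show ?thesis
    using expU_minus_const[of u i th y c] by simp
qed

lemma expU_ge_of_support:
  fixes u :: "'i \<Rightarrow> 'th \<Rightarrow> 'z::finite \<Rightarrow> real"
  assumes "set_pmf y \<subseteq> S" "\<And>z. z \<in> S \<Longrightarrow> c \<le> u i th z"
  shows "c \<le> expU u i th y"
proof -
  have "0 \<le> pmf y z * (u i th z - c)" for z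
    using assms by (cases "z \<in> set_pmf y") (auto simp: set_pmf_iff)
  then have "0 \<le> (\<Sum>z\<in>UNIV. pmf y z * (u i th z - c))"
    by (simp add: sum_nonneg)
  then show ?thesis
    using expU_minus_const[of u i th y c] by simp
qed

lemma expU_eq_of_support:
  fixes u :: "'i \<Rightarrow> 'th \<Rightarrow> 'z::finite \<Rightarrow> real"
  assumes "set_pmf y \<subseteq> S" "\<And>z. z \<in> S \<Longrightarrow> u i th z = c"
  shows "expU u i th y = c"
  using expU_le_of_support[OF assms(1)] expU_ge_of_support[OF assms(1)] assms(2)
  by (metis order_antisym order_refl)

lemma utility_eq_of_expU_le_lower_bound:
  fixes u :: "'i \<Rightarrow> 'th \<Rightarrow> 'z::finite \<Rightarrow> real"
  assumes "set_pmf y \<subseteq> S" "\<And>z. z \<in> S \<Longrightarrow> c \<le> u i th z"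
    and "expU u i th y \<le> c" and "z \<in> set_pmf y"
  shows "u i th z = c"
proof -
  have nonneg: "\<forall>x\<in>UNIV. 0 \<le> pmf y x * (u i th x - c)"
  proof
    fix x
    show "0 \<le> pmf y x * (u i th x - c)"
      using assms(1,2) by (cases "x \<in> set_pmf y") (auto simp: set_pmf_iff)
  qed
  have "(\<Sum>x\<in>UNIV. pmf y x * (u i th x - c)) \<le> 0"
    using assms(3) expU_minus_const[of u i th y c] by simp
  with nonneg have "(\<Sum>x\<in>UNIV. pmf y x * (u i th x - c)) = 0"
    by (meson antisym sum_nonneg)
  then have "pmf y z * (u i th z - c) = 0"
    using sum_nonneg_eq_0_iff[of UNIV "\<lambda>x. pmf y x * (u i th x - c)"] nonneg by simp
  then show ?thesis
    using pmf_positive[OF assms(4)] by simp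
qed

lemma profiles_fun_upd:
  "p \<in> profiles Msg \<Longrightarrow> mj \<in> Msg j \<Longrightarrow> p(j := mj) \<in> profiles Msg"
  unfolding profiles_def by auto

lemma PNE_in_profiles: "p \<in> PNE u Msg g th \<Longrightarrow> p \<in> profiles Msg"
  unfolding PNE_def by blast

lemma set_pmf_subset_of_PNE:
  "pure_Nash_implements u F Msg g \<Longrightarrow> p \<in> PNE u Msg g th \<Longrightarrow> set_pmf (g p) \<subseteq> F th"
  unfolding pure_Nash_implements_def by blast

lemma Lambda_antimono:
  "X \<subseteq> Y \<Longrightarrow> X \<noteq> {} \<Longrightarrow> Lambda u F i Y \<subseteq> Lambda u F i X"
  unfolding Lambda_def is_i_Zstar_th_max_set_def argmax_on_def by blast

lemma argmax_on_le: "x \<in> argmax_on f S \<Longrightarrow> y \<in> S \<Longrightarrow> f y \<le> f x"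
  unfolding argmax_on_def by blast

lemma argmin_subset_lower_contour_set:
  "E \<subseteq> argmin_on (u i th) S \<Longrightarrow> E \<subseteq> S \<inter> lower_contour_set u i E th"
  unfolding argmin_on_def lower_contour_set_def lower_contour_def
  by (auto intro: order_antisym)

text \<open>If Z is an i-max set at some th0, every profile is an equilibrium at th0, so all outcomes
  lie in F th0 \<subseteq> Z*.\<close>
lemma set_pmf_subset_Zstar:
  fixes u :: "'i \<Rightarrow> 'th \<Rightarrow> 'z::finite \<Rightarrow> real"
  assumes "pure_Nash_implements u F Msg g" "p \<in> profiles Msg"
  shows "set_pmf (g p) \<subseteq> Zstar u F"
proof (cases "\<exists>j. is_i_max_set u j UNIV")
  case False
  then show ?thesis by (simp add: Zstar_def)
next
  case True
  then obtain j th0 where "UNIV \<subseteq> argmax_on (u j th0) UNIV"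
    "\<forall>k. k \<noteq> j \<longrightarrow> UNIV \<subseteq> argmax_on (u k th0) UNIV"
    unfolding is_i_max_set_def by blast
  then have "UNIV \<subseteq> argmax_on (u k th0) UNIV" for k
    by (cases "k = j") auto
  then have "u k th0 z = u k th0 undefined" for k z
    unfolding argmax_on_def by (auto intro: order_antisym)
  then have "expU u k th0 y = u k th0 undefined" for k y
    by (intro expU_eq_of_support[of y UNIV]) auto
  then have "p \<in> PNE u Msg g th0"
    using assms(2) unfolding PNE_def by simp
  then have "set_pmf (g p) \<subseteq> F th0"
    using set_pmf_subset_of_PNE[OF assms(1)] by blast
  with True show ?thesis by (auto simp: Zstar_def)
qed

definition deviation_outcomes ::
    "('i \<Rightarrow> 'm set) \<Rightarrow> (('i \<Rightarrow> 'm) \<Rightarrow> 'z pmf) \<Rightarrow> 'i \<Rightarrow> ('i \<Rightarrow> 'm) \<Rightarrow> 'z set" where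
  "deviation_outcomes Msg g i p = (\<Union>mi\<in>Msg i. set_pmf (g (p(i := mi))))"

lemma set_pmf_subset_deviation_outcomes:
  assumes "p \<in> profiles Msg"
  shows "set_pmf (g p) \<subseteq> deviation_outcomes Msg g i p"
proof -
  have "p i \<in> Msg i"
    using assms unfolding profiles_def by blast
  then have "set_pmf (g (p(i := p i))) \<subseteq> deviation_outcomes Msg g i p"
    unfolding deviation_outcomes_def by (rule UN_upper)
  then show ?thesis
    by (simp only: fun_upd_triv)
qed

lemma deviation_outcomes_fun_upd:
  "deviation_outcomes Msg g i (p(i := mi)) = deviation_outcomes Msg g i p"
  unfolding deviation_outcomes_def by (simp only: fun_upd_upd)

lemma deviation_outcomes_subset_lower_contour:
  fixes u :: "'i \<Rightarrow> 'th \<Rightarrow> 'z::finite \<Rightarrow> real"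
  assumes impl: "pure_Nash_implements u F Msg g"
    and eq: "m \<in> PNE u Msg g th"
    and argmin: "F th \<subseteq> argmin_on (u i th) (Zstar u F)"
  shows "deviation_outcomes Msg g i m \<subseteq> Zstar u F \<inter> lower_contour_set u i (F th) th"
proof
  fix z assume "z \<in> deviation_outcomes Msg g i m"
  then obtain mi where mi: "mi \<in> Msg i" and z: "z \<in> set_pmf (g (m(i := mi)))"
    unfolding deviation_outcomes_def by blast
  have F_Z: "F th \<subseteq> Zstar u F"
    using argmin unfolding argmin_on_def by blast
  have min: "u i th w \<le> u i th z'" if "w \<in> F th" "z' \<in> Zstar u F" for w z'
    using argmin that unfolding argmin_on_def by blast
  obtain w0 where "w0 \<in> set_pmf (g m)"
    using set_pmf_not_empty[of "g m"] by blast
  then have w0: "w0 \<in> F th"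
    using set_pmf_subset_of_PNE[OF impl eq] by blast
  have level: "u i th w = u i th w0" if "w \<in> F th" for w
    using min[OF that subsetD[OF F_Z w0]] min[OF w0 subsetD[OF F_Z that]] by (rule order_antisym)
  have "expU u i th (g (m(i := mi))) \<le> expU u i th (g m)"
    using eq mi unfolding PNE_def by blast
  also have "expU u i th (g m) = u i th w0"
    by (rule expU_eq_of_support[where u=u and i=i and th=th,
          OF set_pmf_subset_of_PNE[OF impl eq] level])
  finally have dev_le: "expU u i th (g (m(i := mi))) \<le> u i th w0" .
  have dev_Z: "set_pmf (g (m(i := mi))) \<subseteq> Zstar u F"
    by (rule set_pmf_subset_Zstar[OF impl profiles_fun_upd[OF PNE_in_profiles[OF eq] mi]])
  have "u i th z = u i th w0"
    by (rule utility_eq_of_expU_le_lower_bound[where u=u and i=i and th=th,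
          OF dev_Z min[OF w0] dev_le z])
  with z dev_Z level show "z \<in> Zstar u F \<inter> lower_contour_set u i (F th) th"
    unfolding lower_contour_set_def lower_contour_def by auto
qed

lemma PNE_of_deviation_outcomes_subset:
  fixes u :: "'i \<Rightarrow> 'th \<Rightarrow> 'z::finite \<Rightarrow> real"
  assumes impl: "pure_Nash_implements u F Msg g"
    and p: "p \<in> profiles Msg"
    and dev: "deviation_outcomes Msg g i p \<subseteq> X"
    and lam: "t \<in> Lambda u F i X"
  shows "p \<in> PNE u Msg g t"
proof -
  have X_Z: "X \<subseteq> Zstar u F" and max_i: "X \<subseteq> argmax_on (u i t) X"
    and max_j: "\<And>j. j \<noteq> i \<Longrightarrow> X \<subseteq> argmax_on (u j t) (Zstar u F)"
    using lam unfolding Lambda_def is_i_Zstar_th_max_set_def by auto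
  have p_X: "set_pmf (g p) \<subseteq> X"
    using set_pmf_subset_deviation_outcomes[OF p, of g i] dev by (rule order_trans)
  obtain x0 where "x0 \<in> set_pmf (g p)"
    using set_pmf_not_empty[of "g p"] by blast
  with p_X have x0: "x0 \<in> X" by blast
  have "expU u j t (g (p(j := mj))) \<le> expU u j t (g p)" if mj: "mj \<in> Msg j" for j mj
  proof (cases "j = i")
    case True
    with mj dev have mj_X: "set_pmf (g (p(i := mj))) \<subseteq> X"
      unfolding deviation_outcomes_def by blast
    have level: "u i t x = u i t x0" if "x \<in> X" for x
      using argmax_on_le[OF subsetD[OF max_i x0] that] argmax_on_le[OF subsetD[OF max_i that] x0]
      by (rule order_antisym)
    have "expU u i t (g (p(i := mj))) = expU u i t (g p)"
      using expU_eq_of_support[where u=u and i=i and th=t, OF mj_X level]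
        expU_eq_of_support[where u=u and i=i and th=t, OF p_X level]
      by (rule trans[OF _ sym])
    then show ?thesis
      unfolding True by (rule eq_refl)
  next
    case False
    note max = max_j[OF False]
    have level: "u j t x = u j t x0" if "x \<in> X" for x
      using argmax_on_le[OF subsetD[OF max x0] subsetD[OF X_Z that]]
        argmax_on_le[OF subsetD[OF max that] subsetD[OF X_Z x0]]
      by (rule order_antisym)
    have "expU u j t (g (p(j := mj))) \<le> u j t x0"
      by (rule expU_le_of_support[where u=u and i=j and th=t,
            OF set_pmf_subset_Zstar[OF impl profiles_fun_upd[OF p mj]]])
        (rule argmax_on_le[OF subsetD[OF max x0]])
    also have "u j t x0 = expU u j t (g p)"
      by (rule expU_eq_of_support[where u=u and i=j and th=t, OF p_X level, symmetric])
    finally show ?thesis .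
  qed
  with p show ?thesis
    unfolding PNE_def by blast
qed

lemma deviation_outcomes_subset_of_Lambda:
  fixes u :: "'i \<Rightarrow> 'th \<Rightarrow> 'z::finite \<Rightarrow> real"
  assumes impl: "pure_Nash_implements u F Msg g"
    and p: "p \<in> profiles Msg"
    and dev: "deviation_outcomes Msg g i p \<subseteq> X"
    and lam: "t \<in> Lambda u F i X"
  shows "deviation_outcomes Msg g i p \<subseteq> F t"
proof
  fix z assume "z \<in> deviation_outcomes Msg g i p"
  then obtain mi where mi: "mi \<in> Msg i" and z: "z \<in> set_pmf (g (p(i := mi)))"
    unfolding deviation_outcomes_def by blast
  have "p(i := mi) \<in> PNE u Msg g t"
    using PNE_of_deviation_outcomes_subset[OF impl profiles_fun_upd[OF p mi] _ lam] dev
    by (simp add: deviation_outcomes_fun_upd)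
  with z show "z \<in> F t"
    using set_pmf_subset_of_PNE[OF impl] by blast
qed

lemma Lambda_lower_contour_subset_Theta_i:
  fixes u :: "'i \<Rightarrow> 'th \<Rightarrow> 'z::finite \<Rightarrow> real"
  assumes scc: "is_SCC F"
    and impl: "pure_Nash_implements u F Msg g"
    and argmin: "F th \<subseteq> argmin_on (u i th) (Zstar u F)"
  shows "Lambda u F i (Zstar u F \<inter> lower_contour_set u i (F th) th) \<subseteq> Theta_i u F i th"
proof
  let ?E = "Zstar u F \<inter> lower_contour_set u i (F th) th"
  fix t assume t: "t \<in> Lambda u F i ?E"
  have "F th \<subseteq> ?E"
    using argmin_subset_lower_contour_set[of "F th" u i th, OF argmin] .
  moreover have "F th \<noteq> {}"
    using scc unfolding is_SCC_def by blast
  ultimately have "t \<in> Lambda u F i (F th)"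
    using t by (rule Lambda_antimono[THEN subsetD])
  moreover have "F th \<subseteq> F t"
  proof
    fix w assume "w \<in> F th"
    then obtain p where p: "p \<in> PNE u Msg g th" and w: "w \<in> set_pmf (g p)"
      using impl unfolding pure_Nash_implements_def by blast
    have "deviation_outcomes Msg g i p \<subseteq> F t"
      by (rule deviation_outcomes_subset_of_Lambda[OF impl PNE_in_profiles[OF p]
            deviation_outcomes_subset_lower_contour[OF impl p argmin] t])
    with w show "w \<in> F t"
      using set_pmf_subset_deviation_outcomes[OF PNE_in_profiles[OF p], of g i] by blast
  qed
  ultimately show "t \<in> Theta_i u F i th"
    unfolding Lambda_def Theta_i_def by simp
qed

text \<open>The sets K \<in> Xi_i(th) are the nonempty fixed points of this map inside Theta_i^th.\<close>
definition Xi_map ::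
    "('i \<Rightarrow> 'th \<Rightarrow> 'z \<Rightarrow> real) \<Rightarrow> ('th \<Rightarrow> 'z set) \<Rightarrow> 'i \<Rightarrow> 'th \<Rightarrow> 'th set \<Rightarrow> 'th set" where
  "Xi_map u F i th T = Theta_i u F i th \<inter>
    Lambda u F i (Zstar u F \<inter> lower_contour_set u i (F th) th \<inter> (\<Inter>t\<in>T. F t))"

lemma Xi_map_mono:
  assumes "T \<subseteq> T'" and "Zstar u F \<inter> lower_contour_set u i (F th) th \<inter> (\<Inter>t\<in>T'. F t) \<noteq> {}"
  shows "Xi_map u F i th T \<subseteq> Xi_map u F i th T'"
proof -
  have "Zstar u F \<inter> lower_contour_set u i (F th) th \<inter> (\<Inter>t\<in>T'. F t)
      \<subseteq> Zstar u F \<inter> lower_contour_set u i (F th) th \<inter> (\<Inter>t\<in>T. F t)"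
    using assms(1) by blast
  from Lambda_antimono[where u=u and F=F and i=i, OF this assms(2)] show ?thesis
    unfolding Xi_map_def by blast
qed

lemma deviation_outcomes_subset_of_Xi_map:
  fixes u :: "'i \<Rightarrow> 'th \<Rightarrow> 'z::finite \<Rightarrow> real"
  assumes impl: "pure_Nash_implements u F Msg g"
    and eq: "m \<in> PNE u Msg g th"
    and argmin: "F th \<subseteq> argmin_on (u i th) (Zstar u F)"
    and dev: "deviation_outcomes Msg g i m \<subseteq> (\<Inter>t\<in>T. F t)"
    and t: "t \<in> Xi_map u F i th T"
  shows "deviation_outcomes Msg g i m \<subseteq> F t"
proof (rule deviation_outcomes_subset_of_Lambda[OF impl PNE_in_profiles[OF eq]])
  show "deviation_outcomes Msg g i m
      \<subseteq> Zstar u F \<inter> lower_contour_set u i (F th) th \<inter> (\<Inter>t\<in>T. F t)"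
    using deviation_outcomes_subset_lower_contour[OF impl eq argmin] dev by blast
  show "t \<in> Lambda u F i (Zstar u F \<inter> lower_contour_set u i (F th) th \<inter> (\<Inter>t\<in>T. F t))"
    using t unfolding Xi_map_def by blast
qed

lemma Xi_member_containing_deviation_outcomes:
  fixes u :: "'i \<Rightarrow> 'th \<Rightarrow> 'z::finite \<Rightarrow> real"
  assumes scc: "is_SCC F"
    and impl: "pure_Nash_implements u F Msg g"
    and eq: "m \<in> PNE u Msg g th"
    and argmin: "F th \<subseteq> argmin_on (u i th) (Zstar u F)"
    and maxset: "is_i_Zstar_max_set u F i (Zstar u F \<inter> lower_contour_set u i (F th) th)"
  obtains K where "K \<in> Xi u F i th" and "deviation_outcomes Msg g i m \<subseteq> (\<Inter>t\<in>K. F t)"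
proof -
  let ?E = "Zstar u F \<inter> lower_contour_set u i (F th) th"
  define D where "D = deviation_outcomes Msg g i m"
  define P where "P = {t \<in> Theta_i u F i th. D \<subseteq> F t}"
  define G where "G = gfp (\<lambda>T. Xi_map u F i th (T \<inter> P))"
  have "D \<subseteq> ?E"
    using deviation_outcomes_subset_lower_contour[OF impl eq argmin] unfolding D_def .
  moreover have "D \<noteq> {}"
    using set_pmf_subset_deviation_outcomes[OF PNE_in_profiles[OF eq], of g i]
      set_pmf_not_empty[of "g m"]
    unfolding D_def by blast
  ultimately have nonempty: "?E \<inter> (\<Inter>t\<in>T \<inter> P. F t) \<noteq> {}" for T
    unfolding P_def by blast
  have mono: "mono (\<lambda>T. Xi_map u F i th (T \<inter> P))"
    by (rule monoI) (rule Xi_map_mono[OF _ nonempty], blast)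
  have Xi_map_P: "Xi_map u F i th (T \<inter> P) \<subseteq> P" for T
    using deviation_outcomes_subset_of_Xi_map[OF impl eq argmin, of "T \<inter> P"]
    unfolding P_def D_def Xi_map_def by blast
  have G_fix: "G = Xi_map u F i th (G \<inter> P)"
    unfolding G_def by (rule gfp_unfold[OF mono])
  with Xi_map_P have G_P: "G \<subseteq> P"
    by blast
  have "Lambda u F i ?E \<subseteq> Lambda u F i (?E \<inter> (\<Inter>t\<in>Lambda u F i ?E \<inter> P. F t))"
    by (rule Lambda_antimono[OF _ nonempty]) blast
  with Lambda_lower_contour_subset_Theta_i[OF scc impl argmin]
  have "Lambda u F i ?E \<subseteq> Xi_map u F i th (Lambda u F i ?E \<inter> P)"
    unfolding Xi_map_def by blast
  then have "Lambda u F i ?E \<subseteq> G"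
    unfolding G_def by (rule gfp_upperbound)
  with maxset G_fix G_P have "G \<in> Xi u F i th"
    unfolding is_i_Zstar_max_set_def Xi_def Xi_map_def P_def by (auto simp: Int_absorb2)
  moreover have "D \<subseteq> (\<Inter>t\<in>G. F t)"
    using G_P unfolding P_def by blast
  ultimately show ?thesis
    using that unfolding D_def by blast
qed

theorem lemma8:
  fixes u :: "'i::finite \<Rightarrow> 'th::countable \<Rightarrow> 'z::finite \<Rightarrow> real"
    and F :: "'th \<Rightarrow> 'z set"
    and Msg :: "'i \<Rightarrow> 'm set"
    and g :: "('i \<Rightarrow> 'm) \<Rightarrow> 'z pmf"
    and i :: 'i and th :: 'th and m :: "'i \<Rightarrow> 'm"
  assumes agents: "CARD('i) \<ge> 3"
    and scc: "is_SCC F"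
    and impl: "pure_Nash_implements u F Msg g"
    and m_eq: "m \<in> PNE u Msg g th"
    and argmin: "F th \<subseteq> argmin_on (u i th) (Zstar u F)"
    and Xi_ne: "Xi u F i th \<noteq> {}"
    and maxset: "is_i_Zstar_max_set u F i (Zstar u F \<inter> lower_contour_set u i (F th) th)"
  shows "(\<Union>mi'\<in>Msg i. set_pmf (g (m(i := mi'))))
           \<subseteq> Zstar u F \<inter> lower_contour_set u i (F th) th \<inter> (\<Union>K\<in>Xi u F i th. \<Inter>th'\<in>K. F th')"
proof -
  obtain K where "K \<in> Xi u F i th" and "deviation_outcomes Msg g i m \<subseteq> (\<Inter>t\<in>K. F t)"
    using Xi_member_containing_deviation_outcomes[OF scc impl m_eq argmin maxset] .
  then have "deviation_outcomes Msg g i m \<subseteq> (\<Union>K\<in>Xi u F i th. \<Inter>th'\<in>K. F th')"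
    by blast
  with deviation_outcomes_subset_lower_contour[OF impl m_eq argmin] show ?thesis
    unfolding deviation_outcomes_def by (rule Int_greatest)
qed

end
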